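(* Let $$F(x)=\sum_{n\ge0}t^n\sum_{(P,Q)\in\mathcal{I}_n}x^{\mathrm{contact}(P)},\qquad H(x)\equiv H(t,x,s)=\sum_{n\ge0}t^n\sum_{(P,Q)\in\mathcal{I}_n}x^{\mathrm{contact}(P)}\sum_{i=0}^{2n}s^{Q(i)},$$ and write $F(1),H(1)$ for their specializations at $x=1$. Then $$H(x)=F(x)+sxtF(x)\frac{H(x)-H(1)}{x-1}+xtH(x)\frac{F(x)-F(1)}{x-1}.$$
   Context: A Dyck path of size $n$ is a lattice path from $(0,0)$ to $(2n,0)$ with $n$ up-steps $(1,1)$ and $n$ down-steps $(1,-1)$ never going below height $0$; $\mathcal{D}_n$ is their set; $Q(i)$ denotes the height of $Q$ at abscissa $i$. A contact of a path is a vertex of the path lying on the $x$-axis (including both endpoints); $\mathrm{contact}(P)$ is the number of contacts of $P$. The Tamari order on $\mathcal{D}_n$ is the reflexive transitive closure of the relation: if $P$ has a down-step $d$ immediately followed by an up-step and $\mathfrak{e}$ is the shortest excursion following $d$ (a subpath staying strictly above its starting height except at its last point), the path obtained by exchanging $d$ and $\mathfrak{e}$ is larger than $P$. $\mathcal{I}_n$ is the set of pairs $(P,Q)\in\mathcal{D}_n^2$ with $P\le Q$ (Tamari intervals; $P$ lower path, $Q$ upper path). The series are formal power series in $t$. *)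

theory Defs
  imports "HOL-Computational_Algebra.Formal_Power_Series"
begin

text \<open>A lattice path is a list of steps: True = up-step (1,1), False = down-step (1,-1).\<close>

definition height :: "bool list \<Rightarrow> nat \<Rightarrow> int" where
  "height w i = int (length (filter id (take i w))) - int (length (filter Not (take i w)))"

definition dyck :: "nat \<Rightarrow> bool list set" where
  "dyck n = {w. length w = 2 * n \<and> height w (2 * n) = 0 \<and> (\<forall>i \<le> 2 * n. height w i \<ge> 0)}"

definition excursion :: "bool list \<Rightarrow> bool" where
  "excursion e \<longleftrightarrow> e \<noteq> [] \<and> height e (length e) = 0 \<and>
     (\<forall>i. 0 < i \<and> i < length e \<longrightarrow> height e i > 0)"

text \<open>Covering-type step of the Tamari order: a down-step d followed by an up-step, and the
  excursion e following d, are exchanged.\<close>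
definition tamari_step :: "bool list \<Rightarrow> bool list \<Rightarrow> bool" where
  "tamari_step P Q \<longleftrightarrow> (\<exists>u e v. excursion e \<and> P = u @ [False] @ e @ v \<and> Q = u @ e @ [False] @ v)"

definition tamari_le :: "bool list \<Rightarrow> bool list \<Rightarrow> bool" where
  "tamari_le = tamari_step\<^sup>*\<^sup>*"

definition tamari_intervals :: "nat \<Rightarrow> (bool list \<times> bool list) set" where
  "tamari_intervals n = {(P, Q). P \<in> dyck n \<and> Q \<in> dyck n \<and> tamari_le P Q}"

definition contact :: "bool list \<Rightarrow> nat" where
  "contact P = card {i. i \<le> length P \<and> height P i = 0}"

definition F_gf :: "real \<Rightarrow> real fps" where
  "F_gf x = Abs_fps (\<lambda>n. \<Sum>(P, Q)\<in>tamari_intervals n. x ^ contact P)"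

definition H_gf :: "real \<Rightarrow> real \<Rightarrow> real fps" where
  "H_gf x s = Abs_fps (\<lambda>n. \<Sum>(P, Q)\<in>tamari_intervals n.
      x ^ contact P * (\<Sum>i = 0..2 * n. s ^ nat (height Q i)))"

end

(* Write U = True, D = False. Cut a nonempty interval [P, Q] at the last return of Q to the axis:
   Q = Q1 U Q2 D with Q1, Q2 Dyck paths. A path lies below Q in the Tamari order iff it has the
   form P1 U A D B with |P1| = |Q1|, P1 <= Q1 and A B <= Q2: going down one rotation at a time,
   each rotation acts inside P1, A or B, or moves the D after A leftwards across a final excursion
   of A. Hence nonempty intervals correspond bijectively to triples of an interval [P1, Q1], an
   interval [P2, Q2] and a contact i of P2, split there as P2 = A B. Along this bijection
   contact(P) = contact(P1) + contact(B), and the height sum of Q is that of Q1, plus s times that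
   of Q2, plus 1 for the last vertex. As i runs over the contacts of P2, contact(B) takes each
   value 1, ..., contact(P2) exactly once, and x + ... + x^c = x (x^c - 1) / (x - 1) yields the
   divided differences. *)

theory Submission
  imports Defs
begin

unbundle fps_syntax

section \<open>Heights and balanced words\<close>

lemma height_0 [simp]: "height w 0 = 0"
  by (simp add: height_def)

lemma height_Nil [simp]: "height [] i = 0"
  by (simp add: height_def)

lemma height_Cons_Suc [simp]: "height (a # w) (Suc i) = (if a then 1 else -1) + height w i"
  by (cases a) (simp_all add: height_def)

lemma height_Cons:
  "height (a # w) i = (if i = 0 then 0 else (if a then 1 else -1) + height w (i - 1))"
  by (cases i) simp_all

lemma height_beyond_length: "length w \<le> i \<Longrightarrow> height w i = height w (length w)"
  by (simp add: height_def)

lemma height_append: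
  "height (xs @ ys) i =
    (if i \<le> length xs then height xs i else height xs (length xs) + height ys (i - length xs))"
  by (auto simp add: height_def)

definition balanced :: "bool list \<Rightarrow> bool" where
  "balanced w \<longleftrightarrow> height w (length w) = 0 \<and> (\<forall>i \<le> length w. height w i \<ge> 0)"

lemma mem_dyck_iff: "w \<in> dyck n \<longleftrightarrow> balanced w \<and> length w = 2 * n"
  unfolding dyck_def balanced_def by auto

lemma balanced_Nil [simp]: "balanced []"
  by (simp add: balanced_def)

lemma balanced_height_nonneg: "balanced w \<Longrightarrow> height w i \<ge> 0"
  unfolding balanced_def by (metis height_beyond_length nat_le_linear order_refl)

lemma balanced_height_length: "balanced w \<Longrightarrow> height w (length w) = 0"
  by (simp add: balanced_def)

lemma height_balanced_prefix: "balanced xs \<Longrightarrow> height (xs @ ys) (length xs) = 0"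
  by (simp add: height_append balanced_def)

lemma balanced_append: "balanced xs \<Longrightarrow> balanced ys \<Longrightarrow> balanced (xs @ ys)"
  using balanced_height_nonneg[of xs] balanced_height_nonneg[of ys]
  by (auto simp add: balanced_def height_append)

lemma balanced_appendD:
  assumes "balanced (xs @ ys)" "height xs (length xs) = 0"
  shows "balanced xs" "balanced ys"
proof -
  have nonneg: "height (xs @ ys) i \<ge> 0" for i
    using balanced_height_nonneg[OF assms(1)] .
  show "balanced xs"
    unfolding balanced_def using assms(2) nonneg by (metis height_append)
  show "balanced ys"
    unfolding balanced_def
  proof (intro conjI allI impI)
    show "height ys (length ys) = 0"
      using assms by (cases "ys = []") (simp_all add: balanced_def height_append)
    show "height ys i \<ge> 0" if "i \<le> length ys" for i
      using nonneg[of "length xs + i"] assms(2) by (cases "i = 0") (simp_all add: height_append)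
  qed
qed

lemma balanced_append_left:
  assumes "balanced (xs @ ys)" "balanced ys" shows "balanced xs"
proof (rule balanced_appendD(1)[OF assms(1)])
  show "height xs (length xs) = 0"
    using balanced_height_length[OF assms(1)] balanced_height_length[OF assms(2)]
    by (cases "ys = []") (simp_all add: height_append)
qed

lemma length_balanced: "balanced w \<Longrightarrow> length w = 2 * length (filter id w)"
proof -
  assume "balanced w"
  then have "length (filter id w) = length (filter Not w)"
    by (simp add: balanced_def height_def)
  moreover have "length (filter id w) + length (filter Not w) = length w"
    using sum_length_filter_compl[of id w] by (simp add: comp_def)
  ultimately show ?thesis by linarith
qed

lemma height_lift:
  "height (True # a @ [False]) i =
    (if i = 0 then 0 else if i \<le> Suc (length a) then 1 + height a (i - 1) else height a (length a))"
  by (cases i) (auto simp: height_append height_Cons)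

lemma balanced_lift: "balanced a \<Longrightarrow> balanced (True # a @ [False])"
  unfolding balanced_def height_lift using balanced_height_nonneg[of a] by (simp add: balanced_def)

lemma excursion_lift: "balanced a \<Longrightarrow> excursion (True # a @ [False])"
  unfolding excursion_def height_lift using balanced_height_nonneg[of a]
  by (simp add: balanced_def add_pos_nonneg)

lemma excursion_imp_balanced: "excursion e \<Longrightarrow> balanced e"
  unfolding excursion_def balanced_def
  by (metis le_neq_implies_less less_le order_refl height_0 not_gr0)

lemma excursion_obtain_lift:
  assumes "excursion e"
  obtains a where "e = True # a @ [False]" "balanced a"
proof -
  from assms have "e \<noteq> []" and end_height: "height e (length e) = 0"
    and pos: "\<And>i. 0 < i \<Longrightarrow> i < length e \<Longrightarrow> height e i > 0"
    unfolding excursion_def by auto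
  then obtain x e' where e: "e = x # e'" by (cases e) auto
  have "e' \<noteq> []" using end_height e by (cases x) auto
  then obtain a y where e': "e' = a @ [y]" by (metis rev_exhaust)
  have x: "x = True" using pos[of 1] e e' by (cases x) auto
  have inner: "height e (Suc j) = 1 + height a j" if "j \<le> length a" for j
    using e e' x that by (simp add: height_append)
  have "height e (length e) = 1 + height a (length a) + (if y then 1 else -1)"
    using e e' x by (simp add: height_append)
  moreover have "height e (Suc (length a)) > 0" using pos[of "Suc (length a)"] e e' by simp
  ultimately have y: "y = False" and a_end: "height a (length a) = 0"
    using end_height inner[of "length a"] by (cases y; simp)+
  have "height a j \<ge> 0" if "j \<le> length a" for j
    using pos[of "Suc j"] inner[OF that] e e' that by simp
  then have "balanced a" unfolding balanced_def using a_end by simp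
  then show ?thesis using that e e' x y by simp
qed

lemma balanced_first_return:
  assumes "balanced w" "w \<noteq> []"
  obtains a b where "w = True # a @ False # b" "balanced a" "balanced b"
proof -
  define Z where "Z = {i. 0 < i \<and> i \<le> length w \<and> height w i = 0}"
  have "length w \<in> Z" using assms unfolding Z_def balanced_def by auto
  then have "finite Z" "Z \<noteq> {}" unfolding Z_def by auto
  define m where "m = Min Z"
  have m: "m \<in> Z" and m_min: "\<And>i. i \<in> Z \<Longrightarrow> m \<le> i"
    using \<open>finite Z\<close> \<open>Z \<noteq> {}\<close> by (simp_all add: m_def)
  define c where "c = take m w"
  have w: "w = c @ drop m w" by (simp add: c_def)
  have length_c: "length c = m" using m unfolding Z_def c_def by auto
  have height_c: "height c i = height w i" if "i \<le> m" for i
    using that unfolding c_def height_def by (simp add: min_def)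
  have c_end: "height c (length c) = 0" using height_c length_c m Z_def by auto
  have "balanced (drop m w)" using balanced_appendD(2)[of c] w assms c_end by simp
  have "excursion c"
    unfolding excursion_def
  proof (intro conjI allI impI)
    show "c \<noteq> []" using length_c m Z_def by auto
    show "height c (length c) = 0" by fact
    fix i assume i: "0 < i \<and> i < length c"
    then have "height w i \<noteq> 0" using m_min length_c m Z_def by force
    then show "height c i > 0"
      using balanced_height_nonneg[OF assms(1), of i] height_c i length_c by auto
  qed
  then obtain a where "c = True # a @ [False]" "balanced a" by (rule excursion_obtain_lift)
  then show ?thesis using that w \<open>balanced (drop m w)\<close> by simp
qed

lemma balanced_induct [consumes 1, case_names Nil Cons]:
  assumes "balanced w" "P []"
    "\<And>a b. balanced a \<Longrightarrow> balanced b \<Longrightarrow> P a \<Longrightarrow> P b \<Longrightarrow> P (True # a @ False # b)"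
  shows "P w"
  using assms(1)
proof (induction "length w" arbitrary: w rule: less_induct)
  case less
  show ?case
  proof (cases "w = []")
    case True then show ?thesis using assms(2) by simp
  next
    case False
    then obtain a b where "w = True # a @ False # b" "balanced a" "balanced b"
      using balanced_first_return less.prems by blast
    then show ?thesis using less assms(3) by simp
  qed
qed

lemma balanced_last_return:
  assumes "balanced w" "w \<noteq> []"
  obtains a b where "w = a @ True # b @ [False]" "balanced a" "balanced b"
proof -
  have "w \<noteq> [] \<longrightarrow> (\<exists>a b. w = a @ True # b @ [False] \<and> balanced a \<and> balanced b)"
    using assms(1)
  proof (induction rule: balanced_induct)
    case (Cons a b)
    show ?case
    proof (cases "b = []")
      case True then show ?thesis using Cons by (intro impI exI[of _ "[]"] exI[of _ a]) simp
    next
      case False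
      then obtain b1 b2 where b: "b = b1 @ True # b2 @ [False]" "balanced b1" "balanced b2"
        using Cons by blast
      have "balanced ((True # a @ [False]) @ b1)"
        using balanced_append[OF balanced_lift[OF Cons(1)] b(2)] .
      then show ?thesis using b by (intro impI exI[of _ "True # a @ False # b1"] exI[of _ b2]) simp
    qed
  qed simp
  then show ?thesis using assms that by blast
qed

lemma last_return_unique:
  assumes eq: "a @ True # b @ [False] = a' @ True # b' @ [False]"
    and "balanced a" "balanced b" "balanced a'" "balanced b'"
  shows "a = a'" "b = b'"
proof -
  have shorter: False
    if "a @ True # b @ [False] = a' @ True # b' @ [False]" "length a < length a'"
      "balanced a" "balanced b" "balanced a'" for a b a' b'
  proof -
    have "length a' \<le> length a + length b + 1"
      using arg_cong[OF that(1), of length] by simp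
    then have "height (a @ True # b @ [False]) (length a') =
        1 + height b (length a' - length a - 1)"
      using that(2,3) by (simp add: height_append height_Cons balanced_def)
    moreover have "height (a' @ True # b' @ [False]) (length a') = 0"
      using height_balanced_prefix[OF that(5)] .
    ultimately show False
      using that(1) balanced_height_nonneg[OF that(4), of "length a' - length a - 1"] by simp
  qed
  have "length a = length a'"
    using shorter[OF eq] shorter[OF eq[symmetric]] assms(2-5) by (cases rule: linorder_cases) auto
  then show "a = a'" "b = b'" using eq by simp_all
qed

lemma balanced_append_down_unique:
  assumes eq: "a @ False # b = a' @ False # b'" and "balanced a" "balanced a'"
  shows "a = a'" "b = b'"
proof -
  have shorter: False
    if "a @ False # b = a' @ False # b'" "length a < length a'" "balanced a" "balanced a'"
    for a b a' b'
  proof -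
    have "height (a @ False # b) (Suc (length a)) < 0"
      using that(3) by (simp add: height_append balanced_def)
    moreover have "height (a' @ False # b') (Suc (length a)) \<ge> 0"
      using that(2) balanced_height_nonneg[OF that(4)] by (simp add: height_append)
    ultimately show False using that(1) by simp
  qed
  have "length a = length a'"
    using shorter[OF eq] shorter[OF eq[symmetric]] assms(2,3) by (cases rule: linorder_cases) auto
  then show "a = a'" "b = b'" using eq by simp_all
qed

lemma append_eq_append_prefix:
  assumes "xs @ ys = zs @ ts" "length xs \<le> length zs"
  obtains us where "zs = xs @ us" "ys = us @ ts"
  using assms by (metis append_eq_append_conv_if append_take_drop_id)

section \<open>The Tamari order on balanced words\<close>

lemma tamari_step_append_context:
  assumes "tamari_step p q" shows "tamari_step (x @ p @ y) (x @ q @ y)"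
proof -
  obtain u e v where "excursion e" "p = u @ [False] @ e @ v" "q = u @ e @ [False] @ v"
    using assms unfolding tamari_step_def by blast
  then show ?thesis
    unfolding tamari_step_def by (intro exI[of _ "x @ u"] exI[of _ e] exI[of _ "v @ y"]) simp
qed

lemma tamari_le_append_context: "tamari_le p q \<Longrightarrow> tamari_le (x @ p @ y) (x @ q @ y)"
  unfolding tamari_le_def
  by (induction rule: rtranclp_induct)
    (auto intro: rtranclp.rtrancl_into_rtrancl tamari_step_append_context)

lemma tamari_le_refl [simp]: "tamari_le p p"
  by (simp add: tamari_le_def)

lemma tamari_le_trans [trans]: "tamari_le p q \<Longrightarrow> tamari_le q r \<Longrightarrow> tamari_le p r"
  unfolding tamari_le_def by simp

lemma tamari_step_imp_le: "tamari_step p q \<Longrightarrow> tamari_le p q"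
  by (simp add: tamari_le_def)

lemma tamari_le_converse_induct [consumes 1, case_names base step]:
  assumes "tamari_le p q" "P q"
    and "\<And>p r. tamari_step p r \<Longrightarrow> tamari_le r q \<Longrightarrow> P r \<Longrightarrow> P p"
  shows "P p"
  using assms(1) unfolding tamari_le_def
  by (induction rule: converse_rtranclp_induct) (auto simp: assms(2,3) tamari_le_def)

lemma tamari_le_length: "tamari_le p q \<Longrightarrow> length p = length q"
  unfolding tamari_le_def by (induction rule: rtranclp_induct) (auto simp: tamari_step_def)

lemma tamari_le_move_down: "balanced b \<Longrightarrow> tamari_le (x @ False # b) (x @ b @ [False])"
proof (induction arbitrary: x rule: balanced_induct)
  case (Cons a b)
  let ?e = "True # a @ [False]"
  have "tamari_step (x @ [False] @ ?e @ b) (x @ ?e @ [False] @ b)"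
    unfolding tamari_step_def using excursion_lift[OF Cons(1)] by blast
  moreover have "tamari_le ((x @ ?e) @ False # b) ((x @ ?e) @ b @ [False])"
    by (fact Cons.IH)
  ultimately show ?case by (auto intro: tamari_le_trans tamari_step_imp_le)
qed simp

lemma height_rotate_outside:
  assumes "j \<le> length u \<or> length u + length e < j"
  shows "height (u @ e @ False # v) j = height (u @ False # e @ v) j"
proof (cases "j \<le> length u")
  case False
  then have "height ((u @ e @ [False]) @ v) j = height ((u @ False # e) @ v) j"
    using assms
    by (cases "j = Suc (length u + length e)") (auto simp add: height_append height_Cons)
  then show ?thesis by simp
qed (simp add: height_append)

lemma height_rotated_window:
  "i \<le> length e \<Longrightarrow> height (u @ e @ False # v) (length u + i) = height u (length u) + height e i"
  by (cases "i = 0") (simp_all add: height_append)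

lemma height_unrotated_window:
  "i \<le> length e \<Longrightarrow>
    height (u @ False # e @ v) (Suc (length u + i)) = height u (length u) - 1 + height e i"
  by (simp add: height_append)

lemma height_after_window:
  assumes "excursion e"
  shows "height (u @ e @ False # v) (Suc (length u + length e)) = height u (length u) - 1"
  using height_rotate_outside[of "Suc (length u + length e)" u e v]
    height_unrotated_window[of "length e" e u v] assms
  by (simp add: excursion_def)

lemma balanced_rotate_iff:
  assumes e: "excursion e"
  shows "balanced (u @ False # e @ v) \<longleftrightarrow> balanced (u @ e @ False # v)"
proof -
  let ?p = "u @ False # e @ v" and ?r = "u @ e @ False # v"
  have same_end: "height ?r (length ?r) = height ?p (length ?p)"
    using height_rotate_outside[of "length ?r" u e v] by simp
  have e_nonneg: "height e i \<ge> 0" for i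
    using balanced_height_nonneg[OF excursion_imp_balanced[OF e]] .
  have by_window: "height w j \<ge> 0"
    if outside: "\<And>j. j \<le> length u \<or> length u + length e < j \<Longrightarrow> height w j \<ge> 0"
    and inside: "\<And>i. i < length e \<Longrightarrow> height w (Suc (length u + i)) \<ge> 0" for w j
  proof (cases "j \<le> length u \<or> length u + length e < j")
    case False
    then have "j = Suc (length u + (j - Suc (length u)))" "j - Suc (length u) < length e" by auto
    then show ?thesis using inside by metis
  qed (fact outside)
  show ?thesis
  proof
    assume p: "balanced ?p"
    have "height ?r j \<ge> 0" for j
    proof (rule by_window)
      show "height ?r j \<ge> 0" if "j \<le> length u \<or> length u + length e < j" for j
        using height_rotate_outside[OF that, of v] balanced_height_nonneg[OF p, of j] by simp
      show "height ?r (Suc (length u + i)) \<ge> 0" if "i < length e" for i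
        using height_rotated_window[of "Suc i" e u v] height_unrotated_window[of "Suc i" e u v]
          balanced_height_nonneg[OF p, of "Suc (length u + Suc i)"] that by simp
    qed
    then show "balanced ?r"
      using p same_end by (simp add: balanced_def)
  next
    assume r: "balanced ?r"
    have "height ?p j \<ge> 0" for j
    proof (rule by_window)
      show "height ?p j \<ge> 0" if "j \<le> length u \<or> length u + length e < j" for j
        using height_rotate_outside[OF that, of v] balanced_height_nonneg[OF r, of j] by simp
      show "height ?p (Suc (length u + i)) \<ge> 0" if "i < length e" for i
        using height_unrotated_window[of i e u v] height_after_window[OF e, of u v] e_nonneg[of i]
          balanced_height_nonneg[OF r, of "Suc (length u + length e)"] that by simp
    qed
    then show "balanced ?p"
      using r same_end by (simp add: balanced_def)
  qed
qed

lemma tamari_step_balanced_iff: "tamari_step p q \<Longrightarrow> balanced p \<longleftrightarrow> balanced q"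
  unfolding tamari_step_def using balanced_rotate_iff by auto

lemma height_rotated_window_pos:
  assumes "excursion e" "balanced (u @ e @ False # v)" "length u \<le> j" "j \<le> length u + length e"
  shows "height (u @ e @ False # v) j > 0"
proof -
  have "height u (length u) \<ge> 1"
    using height_after_window[OF assms(1), of u v]
      balanced_height_nonneg[OF assms(2), of "Suc (length u + length e)"] by simp
  moreover have "height (u @ e @ False # v) j = height u (length u) + height e (j - length u)"
    using height_rotated_window[of "j - length u" e u v] assms(3,4) by simp
  ultimately show ?thesis
    using balanced_height_nonneg[OF excursion_imp_balanced[OF assms(1)]] by (smt (verit))
qed

lemma tamari_le_compose:
  assumes "tamari_le p1 q1" "tamari_le (a @ b) q2" "balanced b"
  shows "tamari_le (p1 @ True # a @ False # b) (q1 @ True # q2 @ [False])"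
proof -
  have "tamari_le (p1 @ True # a @ False # b) (q1 @ True # a @ False # b)"
    using tamari_le_append_context[OF assms(1), of "[]"] by simp
  also have "tamari_le \<dots> ((q1 @ [True]) @ (a @ b) @ [False])"
    using tamari_le_move_down[OF assms(3), of "q1 @ True # a"] by simp
  also have "tamari_le \<dots> ((q1 @ [True]) @ q2 @ [False])"
    using tamari_le_append_context[OF assms(2)] .
  finally show ?thesis by simp
qed

lemma tamari_step_localize:
  assumes "excursion e" "u @ e @ False # v = x @ r @ y"
    and "length x \<le> length u" "length u + length e < length x + length r"
  obtains p where "u @ False # e @ v = x @ p @ y" "tamari_step p r"
proof -
  obtain u' where u: "u = x @ u'" "u' @ e @ False # v = r @ y"
    using append_eq_append_prefix[OF assms(2)[symmetric] assms(3)] by metis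
  have "(u' @ e @ [False]) @ v = r @ y" "length (u' @ e @ [False]) \<le> length r"
    using assms(4) u by simp_all
  then obtain v' where "r = u' @ e @ False # v'" "v = v' @ y"
    by (rule append_eq_append_prefix) simp
  moreover have "tamari_step (u' @ False # e @ v') (u' @ e @ False # v')"
    unfolding tamari_step_def using assms(1) by force
  ultimately show ?thesis using that u by simp
qed

text \<open>The rotated window of a step, on which the upper word stays strictly positive, avoids the
  two returns to the axis delimiting \<open>True # a @ [False]\<close>.\<close>

lemma rotation_window_cases:
  assumes "excursion e" "balanced (u @ e @ False # v)"
    and eq: "u @ e @ False # v = r1 @ True # a @ False # b" and "balanced r1" "balanced a"
  obtains "length u + length e < length r1"
    | "length r1 < length u" "length u + length e < length r1 + 1 + length a"
    | "length r1 < length u" "length u + length e = length r1 + 1 + length a"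
    | "length r1 + length a + 2 < length u"
      "length u + length e < length r1 + length a + 2 + length b"
proof -
  have "height (u @ e @ False # v) (length r1) = 0"
    "height (u @ e @ False # v) (length r1 + length a + 2) = 0"
    using height_balanced_prefix[OF assms(4)]
      height_balanced_prefix[OF balanced_append[OF assms(4) balanced_lift[OF assms(5)]], of b] eq
    by simp_all
  moreover have "length (u @ e @ False # v) = length (r1 @ True # a @ False # b)"
    using eq by simp
  ultimately show ?thesis
    using height_rotated_window_pos[OF assms(1,2), of "length r1"]
      height_rotated_window_pos[OF assms(1,2), of "length r1 + length a + 2"] that
    by fastforce
qed

text \<open>The step takes place inside \<open>r1\<close>, inside \<open>a\<close> or inside \<open>b\<close>, or it moves the down
  step closing \<open>a\<close> leftwards over a final excursion \<open>e\<close> of \<open>a\<close>, which then joins \<open>b\<close>.\<close>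

lemma tamari_step_decompose:
  assumes step: "tamari_step p r" and "balanced p"
    and r: "r = r1 @ True # a @ False # b" and r1: "balanced r1" and a: "balanced a"
    and b: "balanced b"
  obtains p1 a' b' where "p = p1 @ True # a' @ False # b'" "length p1 = length r1"
    "tamari_le p1 r1" "tamari_le (a' @ b') (a @ b)" "balanced p1" "balanced a'" "balanced b'"
proof -
  obtain u e v where e: "excursion e" and p: "p = u @ False # e @ v"
    and r': "u @ e @ False # v = r1 @ True # a @ False # b"
    using step r unfolding tamari_step_def by auto
  have "balanced (u @ e @ False # v)"
    using tamari_step_balanced_iff[OF step] \<open>balanced p\<close> r r' by simp
  from rotation_window_cases[OF e this r' r1 a] show ?thesis
  proof cases
    case 1
    then obtain p1 where "p = p1 @ True # a @ False # b" "tamari_step p1 r1"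
      using tamari_step_localize[OF e, of u v "[]" r1 "True # a @ False # b"] p r' by auto
    then show ?thesis
      using that r1 a b tamari_step_balanced_iff tamari_step_imp_le tamari_le_length by fastforce
  next
    case 2
    then obtain a' where "p = (r1 @ [True]) @ a' @ False # b" "tamari_step a' a"
      using tamari_step_localize[OF e, of u v "r1 @ [True]" a "False # b"] p r' by auto
    moreover have "tamari_step (a' @ b) (a @ b)"
      using tamari_step_append_context[OF \<open>tamari_step a' a\<close>, of "[]"] by simp
    ultimately show ?thesis
      using that r1 a b tamari_step_balanced_iff tamari_step_imp_le by fastforce
  next
    case 3
    have "(r1 @ [True]) @ a @ False # b = u @ e @ False # v" "length (r1 @ [True]) \<le> length u"
      using 3 r' by simp_all
    then obtain u' where u': "u = r1 @ True # u'" "a @ False # b = u' @ e @ False # v"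
      by (rule append_eq_append_prefix) simp
    then have "a = u' @ e" "v = b"
      using 3 append_eq_append_conv[of a "u' @ e" "False # b" "False # v"] by simp_all
    moreover have "balanced u'" "balanced (e @ b)"
      using balanced_append_left[of u' e] balanced_append[of e b] excursion_imp_balanced[OF e]
        a b \<open>a = u' @ e\<close> by simp_all
    ultimately show ?thesis
      using that[of r1 u' "e @ b"] p r1 u'(1) by simp
  next
    case 4
    then obtain b' where "p = (r1 @ True # a @ [False]) @ b' @ []" "tamari_step b' b"
      using tamari_step_localize[OF e, of u v "r1 @ True # a @ [False]" b "[]"] p r' by auto
    moreover have "tamari_step (a @ b') (a @ b)"
      using tamari_step_append_context[OF \<open>tamari_step b' b\<close>, of a "[]"] by simp
    ultimately show ?thesis
      using that r1 a b tamari_step_balanced_iff tamari_step_imp_le by fastforce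
  qed
qed

lemma tamari_le_decompose:
  assumes "tamari_le p q" "balanced p"
    and q: "q = q1 @ True # q2 @ [False]" "balanced q1" "balanced q2"
  obtains p1 a b where "p = p1 @ True # a @ False # b" "length p1 = length q1"
    "tamari_le p1 q1" "tamari_le (a @ b) q2" "balanced p1" "balanced a" "balanced b"
proof -
  have "\<exists>p1 a b. p = p1 @ True # a @ False # b \<and> length p1 = length q1 \<and> tamari_le p1 q1
      \<and> tamari_le (a @ b) q2 \<and> balanced p1 \<and> balanced a \<and> balanced b"
    using assms(1,2)
  proof (induction rule: tamari_le_converse_induct)
    case base
    show ?case using q by (intro exI[of _ q1] exI[of _ q2] exI[of _ "[]"]) simp
  next
    case (step p r)
    then obtain r1 a b where r: "r = r1 @ True # a @ False # b" "length r1 = length q1"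
      "tamari_le r1 q1" "tamari_le (a @ b) q2" "balanced r1" "balanced a" "balanced b"
      using tamari_step_balanced_iff by blast
    obtain p1 a' b' where "p = p1 @ True # a' @ False # b'" "length p1 = length r1"
      "tamari_le p1 r1" "tamari_le (a' @ b') (a @ b)" "balanced p1" "balanced a'" "balanced b'"
      using tamari_step_decompose[OF step.hyps(1) step.prems r(1) r(5-7)] .
    then show ?case using r(2-4) by (metis tamari_le_trans)
  qed
  then show ?thesis using that by blast
qed

section \<open>Contacts and height sums\<close>

definition contacts :: "bool list \<Rightarrow> nat set" where
  "contacts w = {i. i \<le> length w \<and> height w i = 0}"

lemma contact_eq_card_contacts: "contact w = card (contacts w)"
  by (simp add: contact_def contacts_def)

lemma finite_contacts [simp]: "finite (contacts w)"
  unfolding contacts_def by (rule finite_subset[of _ "{..length w}"]) auto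

lemma contacts_append:
  assumes "balanced xs"
  shows "contacts (xs @ ys) = contacts xs \<union> (\<lambda>j. length xs + j) ` contacts ys"
proof (intro set_eqI iffI)
  fix j assume j: "j \<in> contacts (xs @ ys)"
  show "j \<in> contacts xs \<union> (\<lambda>j. length xs + j) ` contacts ys"
  proof (cases "j \<le> length xs")
    case False
    then have "j - length xs \<in> contacts ys" "j = length xs + (j - length xs)"
      using j assms by (auto simp: contacts_def balanced_def height_append)
    then show ?thesis by blast
  qed (use j in \<open>simp add: contacts_def height_append\<close>)
next
  fix j assume "j \<in> contacts xs \<union> (\<lambda>j. length xs + j) ` contacts ys"
  then show "j \<in> contacts (xs @ ys)"
    using assms by (auto simp: contacts_def balanced_def height_append)
qed

lemma contact_append:
  assumes "balanced xs" shows "contact (xs @ ys) + 1 = contact xs + contact ys"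
proof -
  have "contacts xs \<inter> (\<lambda>j. length xs + j) ` contacts ys = {length xs}"
    using assms by (force simp: contacts_def balanced_def)
  moreover have "card ((\<lambda>j. length xs + j) ` contacts ys) = card (contacts ys)"
    by (simp add: card_image)
  ultimately show ?thesis
    using card_Un_Int[of "contacts xs" "(\<lambda>j. length xs + j) ` contacts ys"]
    by (simp add: contact_eq_card_contacts contacts_append[OF assms])
qed

lemma contact_lift: "balanced a \<Longrightarrow> contact (True # a @ [False]) = 2"
proof -
  assume a: "balanced a"
  have "contacts (True # a @ [False]) = {0, Suc (Suc (length a))}"
    using a balanced_height_nonneg[OF a] unfolding contacts_def height_lift
    by (auto simp: balanced_def add_nonneg_eq_0_iff)
  then show ?thesis by (simp add: contact_eq_card_contacts)
qed

lemma contact_decompose: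
  assumes "balanced p1" "balanced a"
  shows "contact (p1 @ True # a @ False # b) = contact p1 + contact b"
  using contact_append[OF assms(1), of "True # a @ [False]"]
    contact_append[OF balanced_append[OF assms(1) balanced_lift[OF assms(2)]], of b]
    contact_lift[OF assms(2)]
  by simp

lemma balanced_split_at_contact:
  assumes "balanced w" "i \<in> contacts w"
  shows "balanced (take i w)" "balanced (drop i w)" "length (take i w) = i"
proof -
  have "length (take i w) = i" "height (take i w) (length (take i w)) = 0"
    using assms(2) by (simp_all add: contacts_def height_def)
  then show "balanced (take i w)" "balanced (drop i w)" "length (take i w) = i"
    using balanced_appendD[of "take i w" "drop i w"] assms(1) by simp_all
qed

lemma contact_drop:
  assumes "balanced w" "i \<in> contacts w"
  shows "contact (drop i w) = card {j \<in> contacts w. i \<le> j}"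
proof -
  note split = balanced_split_at_contact[OF assms]
  have "contacts w = contacts (take i w) \<union> (\<lambda>j. i + j) ` contacts (drop i w)"
    using contacts_append[OF split(1), of "drop i w"] split(3) by simp
  moreover have "j \<le> i" if "j \<in> contacts (take i w)" for j
    using that split(3) by (auto simp: contacts_def)
  moreover have "i \<in> (\<lambda>j. i + j) ` contacts (drop i w)"
    by (force simp: contacts_def)
  ultimately have "{j \<in> contacts w. i \<le> j} = (\<lambda>j. i + j) ` contacts (drop i w)"
    by fastforce
  then show ?thesis
    by (simp add: contact_eq_card_contacts card_image)
qed

lemma bij_betw_card_upper_set:
  fixes S :: "'a::linorder set"
  assumes "finite S"
  shows "bij_betw (\<lambda>i. card {j \<in> S. i \<le> j}) S {1..card S}"
proof -
  let ?g = "\<lambda>i. card {j \<in> S. i \<le> j}"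
  have decreasing: "?g b < ?g a" if "a \<in> S" "a < b" for a b
  proof (rule psubset_card_mono)
    have "a \<in> {j \<in> S. a \<le> j} - {j \<in> S. b \<le> j}" "{j \<in> S. b \<le> j} \<subseteq> {j \<in> S. a \<le> j}"
      using that by auto
    then show "{j \<in> S. b \<le> j} \<subset> {j \<in> S. a \<le> j}" by blast
  qed (simp add: assms)
  have inj: "inj_on ?g S"
  proof (rule inj_onI)
    fix a b assume "a \<in> S" "b \<in> S" "?g a = ?g b"
    then show "a = b"
      using decreasing[of a b] decreasing[of b a] by (cases a b rule: linorder_cases) auto
  qed
  have "?g i \<in> {1..card S}" if "i \<in> S" for i
  proof -
    have "{j \<in> S. i \<le> j} \<noteq> {}" using that by auto
    then show ?thesis
      using assms by (simp add: Suc_le_eq card_gt_0_iff card_mono)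
  qed
  then have "?g ` S = {1..card S}"
    using inj by (intro card_subset_eq) (auto simp: card_image)
  then show ?thesis
    using inj by (simp add: bij_betw_def)
qed

lemma sum_contacts_drop:
  assumes "balanced w"
  shows "(\<Sum>i\<in>contacts w. f (contact (drop i w))) = (\<Sum>j=1..contact w. f j)"
proof -
  have "(\<Sum>i\<in>contacts w. f (contact (drop i w))) = (\<Sum>i\<in>contacts w. f (card {j \<in> contacts w. i \<le> j}))"
    using contact_drop[OF assms] by simp
  also have "\<dots> = (\<Sum>j=1..contact w. f j)"
    unfolding contact_eq_card_contacts
    by (rule sum.reindex_bij_betw[OF bij_betw_card_upper_set]) simp
  finally show ?thesis .
qed

definition height_sum :: "'a::comm_semiring_1 \<Rightarrow> bool list \<Rightarrow> 'a" where
  "height_sum s w = (\<Sum>i=0..length w. s ^ nat (height w i))"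

lemma height_sum_Nil [simp]: "height_sum s [] = 1"
  by (simp add: height_sum_def)

lemma height_sum_last_return:
  assumes "balanced q1" "balanced q2"
  shows "height_sum s (q1 @ True # q2 @ [False]) = height_sum s q1 + s * height_sum s q2 + 1"
proof -
  let ?q = "q1 @ True # q2 @ [False]"
  let ?f = "\<lambda>i. s ^ nat (height ?q i)"
  define l1 l2 where "l1 = length q1" and "l2 = length q2"
  have "{0..l1 + l2 + 2} = {0..l1} \<union> {0 + (l1 + 1)..l2 + (l1 + 1)} \<union> {l1 + l2 + 2}"
    by auto
  then have "height_sum s ?q =
      sum ?f {0..l1} + sum ?f {0 + (l1 + 1)..l2 + (l1 + 1)} + ?f (l1 + l2 + 2)"
    unfolding height_sum_def l1_def l2_def by (simp add: sum.union_disjoint add_ac)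
  also have "sum ?f {0..l1} = height_sum s q1"
    unfolding height_sum_def l1_def by (rule sum.cong) (simp_all add: height_append)
  also have "sum ?f {0 + (l1 + 1)..l2 + (l1 + 1)} = (\<Sum>i=0..l2. ?f (i + (l1 + 1)))"
    by (rule sum.shift_bounds_cl_nat_ivl)
  also have "\<dots> = s * height_sum s q2"
    unfolding height_sum_def l2_def sum_distrib_left
  proof (rule sum.cong)
    fix i assume "i \<in> {0..length q2}"
    then have "height ?q (i + (l1 + 1)) = 1 + height q2 i"
      using assms(1) by (simp add: l1_def balanced_def height_append)
    then show "?f (i + (l1 + 1)) = s * s ^ nat (height q2 i)"
      using balanced_height_nonneg[OF assms(2), of i] by (simp add: nat_add_distrib)
  qed simp
  also have "?f (l1 + l2 + 2) = 1"
    using height_balanced_prefix[OF balanced_append[OF assms(1) balanced_lift[OF assms(2)]],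
        of "[]"]
    by (simp add: l1_def l2_def)
  finally show ?thesis by simp
qed

section \<open>Decomposition of intervals\<close>

lemma mem_tamari_intervals_iff:
  "(p, q) \<in> tamari_intervals n \<longleftrightarrow>
    balanced p \<and> balanced q \<and> length p = 2 * n \<and> length q = 2 * n \<and> tamari_le p q"
  by (auto simp: tamari_intervals_def mem_dyck_iff)

lemma finite_tamari_intervals: "finite (tamari_intervals n)"
proof -
  have "dyck n \<subseteq> {w. set w \<subseteq> UNIV \<and> length w = 2 * n}"
    by (auto simp: dyck_def)
  then have "finite (dyck n)"
    using finite_lists_length_eq[of "UNIV :: bool set"] finite_subset by auto
  moreover have "tamari_intervals n \<subseteq> dyck n \<times> dyck n"
    by (auto simp: tamari_intervals_def)
  ultimately show ?thesis
    using finite_subset by blast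
qed

fun join_intervals ::
  "bool list \<times> bool list \<Rightarrow> bool list \<times> bool list \<Rightarrow> nat \<Rightarrow> bool list \<times> bool list"
where
  "join_intervals (p1, q1) (p2, q2) i =
    (p1 @ True # take i p2 @ False # drop i p2, q1 @ True # q2 @ [False])"

definition join_data ::
  "nat \<Rightarrow> (nat \<times> (bool list \<times> bool list) \<times> (bool list \<times> bool list) \<times> nat) set"
where
  "join_data m =
    (SIGMA k:{..m}. tamari_intervals k \<times> (SIGMA pq:tamari_intervals (m - k). contacts (fst pq)))"

lemma join_intervals_in_tamari_intervals:
  assumes "k \<le> m" "(p1, q1) \<in> tamari_intervals k" "(p2, q2) \<in> tamari_intervals (m - k)"
    and "i \<in> contacts p2"
  shows "join_intervals (p1, q1) (p2, q2) i \<in> tamari_intervals (Suc m)"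
proof -
  note pq1 = assms(2)[unfolded mem_tamari_intervals_iff]
  note pq2 = assms(3)[unfolded mem_tamari_intervals_iff]
  note split = balanced_split_at_contact[OF conjunct1[OF pq2] assms(4)]
  have "balanced (p1 @ True # take i p2 @ False # drop i p2)"
    using balanced_append[OF conjunct1[OF pq1]
        balanced_append[OF balanced_lift[OF split(1)] split(2)]]
    by simp
  moreover have "balanced (q1 @ True # q2 @ [False])"
    using balanced_append[OF conjunct1[OF conjunct2[OF pq1]] balanced_lift[of q2]] pq2 by simp
  moreover have "tamari_le (p1 @ True # take i p2 @ False # drop i p2) (q1 @ True # q2 @ [False])"
    using tamari_le_compose[of p1 q1 "take i p2" "drop i p2" q2] pq1 pq2 split(2) by simp
  moreover have "length (take i p2) + length (drop i p2) = length p2"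
    by simp
  ultimately show ?thesis
    using pq1 pq2 assms(1) by (simp add: mem_tamari_intervals_iff del: length_take length_drop)
qed

lemma inj_on_join_intervals:
  "inj_on (\<lambda>(k, pq1, pq2, i). join_intervals pq1 pq2 i) (join_data m)"
proof (rule inj_onI)
  fix x y
  assume xy: "x \<in> join_data m" "y \<in> join_data m"
    and eq': "(\<lambda>(k, pq1, pq2, i). join_intervals pq1 pq2 i) x =
      (\<lambda>(k, pq1, pq2, i). join_intervals pq1 pq2 i) y"
  moreover obtain k p1 q1 p2 q2 i where x: "x = (k, (p1, q1), (p2, q2), i)"
    by (metis prod.collapse)
  moreover obtain k' p1' q1' p2' q2' i' where y: "y = (k', (p1', q1'), (p2', q2'), i')"
    by (metis prod.collapse)
  ultimately have eq: "join_intervals (p1, q1) (p2, q2) i = join_intervals (p1', q1') (p2', q2') i'"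
    by simp
  have pq: "(p1, q1) \<in> tamari_intervals k" "(p2, q2) \<in> tamari_intervals (m - k)" "i \<in> contacts p2"
    "(p1', q1') \<in> tamari_intervals k'" "(p2', q2') \<in> tamari_intervals (m - k')" "i' \<in> contacts p2'"
    using xy x y by (auto simp: join_data_def)
  then have b: "balanced p1" "balanced q1" "balanced p2" "balanced q2"
    "balanced p1'" "balanced q1'" "balanced p2'" "balanced q2'"
    by (simp_all add: mem_tamari_intervals_iff)
  have "q1 = q1'" "q2 = q2'"
    using last_return_unique[of q1 q2 q1' q2'] eq b by simp_all
  moreover have "k = k'"
    using pq \<open>q1 = q1'\<close> by (simp add: mem_tamari_intervals_iff)
  moreover have "p1 = p1'"
    and rest: "take i p2 @ False # drop i p2 = take i' p2' @ False # drop i' p2'"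
    using eq pq \<open>k = k'\<close> by (simp_all add: mem_tamari_intervals_iff append_eq_append_conv)
  moreover have "take i p2 = take i' p2'" "drop i p2 = drop i' p2'"
    using balanced_append_down_unique[OF rest] balanced_split_at_contact(1) b(3,7) pq(3,6)
    by simp_all
  moreover have "i = i'"
    using balanced_split_at_contact(3)[OF b(3) pq(3)] balanced_split_at_contact(3)[OF b(7) pq(6)]
      \<open>take i p2 = take i' p2'\<close> by simp
  ultimately show "x = y"
    using x y by (metis append_take_drop_id)
qed

lemma tamari_intervals_Suc_decompose:
  assumes "(p, q) \<in> tamari_intervals (Suc m)"
  obtains k pq1 p2 q2 i
  where "(k, pq1, (p2, q2), i) \<in> join_data m" "(p, q) = join_intervals pq1 (p2, q2) i"
proof -
  have p: "balanced p" "length p = 2 * Suc m" and q: "balanced q" "length q = 2 * Suc m"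
    and "tamari_le p q"
    using assms by (simp_all add: mem_tamari_intervals_iff)
  have "q \<noteq> []" using q(2) by auto
  then obtain q1 q2 where q12: "q = q1 @ True # q2 @ [False]" "balanced q1" "balanced q2"
    by (rule balanced_last_return[OF q(1)])
  obtain p1 a b where p1ab: "p = p1 @ True # a @ False # b" "length p1 = length q1"
    "tamari_le p1 q1" "tamari_le (a @ b) q2" "balanced p1" "balanced a" "balanced b"
    using tamari_le_decompose[OF \<open>tamari_le p q\<close> p(1) q12] .
  define k where "k = length q1 div 2"
  have "length q1 = 2 * k" "length q2 = 2 * (m - k)" "k \<le> m"
    using length_balanced[OF q12(2)] length_balanced[OF q12(3)] q(2) q12(1) unfolding k_def by auto
  moreover have "length (a @ b) = length q2"
    using tamari_le_length[OF p1ab(4)] .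
  moreover have "length a \<in> contacts (a @ b)"
    using height_balanced_prefix[OF p1ab(6)] by (simp add: contacts_def)
  ultimately have "(k, (p1, q1), (a @ b, q2), length a) \<in> join_data m"
    using p1ab q12 balanced_append[OF p1ab(6,7)]
    by (simp add: join_data_def mem_tamari_intervals_iff)
  moreover have "(p, q) = join_intervals (p1, q1) (a @ b, q2) (length a)"
    using p1ab q12 by simp
  ultimately show ?thesis using that by blast
qed

lemma bij_betw_join_intervals:
  "bij_betw (\<lambda>(k, pq1, pq2, i). join_intervals pq1 pq2 i) (join_data m) (tamari_intervals (Suc m))"
proof (rule bij_betw_imageI[OF inj_on_join_intervals], intro equalityI subsetI)
  fix pq assume "pq \<in> (\<lambda>(k, pq1, pq2, i). join_intervals pq1 pq2 i) ` join_data m"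
  then show "pq \<in> tamari_intervals (Suc m)"
    by (auto simp: join_data_def intro: join_intervals_in_tamari_intervals)
next
  fix pq assume "pq \<in> tamari_intervals (Suc m)"
  then show "pq \<in> (\<lambda>(k, pq1, pq2, i). join_intervals pq1 pq2 i) ` join_data m"
    by (cases pq) (auto elim!: tamari_intervals_Suc_decompose intro: rev_image_eqI)
qed

lemma sum_tamari_intervals_Suc:
  "(\<Sum>pq\<in>tamari_intervals (Suc m). f pq) =
    (\<Sum>k\<le>m. \<Sum>pq1\<in>tamari_intervals k. \<Sum>pq2\<in>tamari_intervals (m - k).
       \<Sum>i\<in>contacts (fst pq2). f (join_intervals pq1 pq2 i))" (is "_ = ?rhs")
proof -
  have "(\<Sum>pq\<in>tamari_intervals (Suc m). f pq) =
      (\<Sum>(k, pq1, pq2, i)\<in>join_data m. f (join_intervals pq1 pq2 i))"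
    using sum.reindex_bij_betw[OF bij_betw_join_intervals, of f] by (simp add: case_prod_beta)
  also have "\<dots> = ?rhs"
    unfolding join_data_def
    by (simp add: sum.Sigma finite_tamari_intervals sum.cartesian_product split_def)
  finally show ?thesis .
qed

section \<open>Generating functions\<close>

lemma F_gf_nth: "F_gf x $ n = (\<Sum>pq\<in>tamari_intervals n. x ^ contact (fst pq))"
  by (simp add: F_gf_def split_def)

lemma H_gf_nth:
  "H_gf x s $ n = (\<Sum>pq\<in>tamari_intervals n. x ^ contact (fst pq) * height_sum s (snd pq))"
  unfolding H_gf_def height_sum_def
  by (auto intro!: sum.cong simp: mem_tamari_intervals_iff split_def)

lemma H_gf_nth_0: "H_gf x s $ 0 = F_gf x $ 0"
  unfolding H_gf_nth F_gf_nth by (auto intro!: sum.cong simp: mem_tamari_intervals_iff)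

text \<open>Combinatorial forms of \<open>x (F(x) - F(1)) / (x - 1)\<close> and \<open>x (H(x) - H(1)) / (x - 1)\<close>.\<close>

definition F_pointed_gf :: "real \<Rightarrow> real fps" where
  "F_pointed_gf x = Abs_fps (\<lambda>n. \<Sum>(p, q)\<in>tamari_intervals n. \<Sum>i\<in>contacts p. x ^ contact (drop i p))"

definition H_pointed_gf :: "real \<Rightarrow> real \<Rightarrow> real fps" where
  "H_pointed_gf x s = Abs_fps (\<lambda>n.
     \<Sum>(p, q)\<in>tamari_intervals n. height_sum s q * (\<Sum>i\<in>contacts p. x ^ contact (drop i p)))"

lemma contact_join_intervals:
  assumes "pq1 \<in> tamari_intervals k" "pq2 \<in> tamari_intervals l" "i \<in> contacts (fst pq2)"
  shows "contact (fst (join_intervals pq1 pq2 i)) = contact (fst pq1) + contact (drop i (fst pq2))"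
  using assms contact_decompose balanced_split_at_contact(1)
  by (cases pq1, cases pq2) (auto simp: mem_tamari_intervals_iff)

lemma height_sum_join_intervals:
  assumes "pq1 \<in> tamari_intervals k" "pq2 \<in> tamari_intervals l"
  shows "height_sum s (snd (join_intervals pq1 pq2 i)) =
    height_sum s (snd pq1) + s * height_sum s (snd pq2) + 1"
  using assms height_sum_last_return
  by (cases pq1, cases pq2) (auto simp: mem_tamari_intervals_iff)

lemma F_gf_nth_Suc: "F_gf x $ Suc m = (F_gf x * F_pointed_gf x) $ m"
proof -
  have "F_gf x $ Suc m = (\<Sum>k\<le>m. \<Sum>pq1\<in>tamari_intervals k. \<Sum>pq2\<in>tamari_intervals (m - k).
      \<Sum>i\<in>contacts (fst pq2). x ^ contact (fst pq1) * x ^ contact (drop i (fst pq2)))"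
    unfolding F_gf_nth sum_tamari_intervals_Suc
    by (intro sum.cong refl) (simp add: contact_join_intervals power_add)
  also have "\<dots> = (\<Sum>k\<le>m. F_gf x $ k * F_pointed_gf x $ (m - k))"
    by (simp only: sum_distrib_left[symmetric] sum_distrib_right[symmetric])
      (simp add: F_gf_nth F_pointed_gf_def split_def)
  also have "\<dots> = (F_gf x * F_pointed_gf x) $ m"
    by (simp add: fps_mult_nth atLeast0AtMost)
  finally show ?thesis .
qed

lemma H_gf_nth_Suc:
  "H_gf x s $ Suc m =
    ((H_gf x s + F_gf x) * F_pointed_gf x + fps_const s * F_gf x * H_pointed_gf x s) $ m"
proof -
  let ?c = "\<lambda>pq. x ^ contact (fst pq)" and ?h = "\<lambda>pq. height_sum s (snd pq)"
  have "H_gf x s $ Suc m = (\<Sum>k\<le>m. \<Sum>pq1\<in>tamari_intervals k. \<Sum>pq2\<in>tamari_intervals (m - k).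
      \<Sum>i\<in>contacts (fst pq2). (?c pq1 * ?h pq1 + ?c pq1) * x ^ contact (drop i (fst pq2))
        + s * (?c pq1 * (?h pq2 * x ^ contact (drop i (fst pq2)))))"
    unfolding H_gf_nth sum_tamari_intervals_Suc
    by (intro sum.cong refl)
      (simp add: contact_join_intervals height_sum_join_intervals power_add algebra_simps)
  also have "\<dots> = (\<Sum>k\<le>m. (H_gf x s $ k + F_gf x $ k) * F_pointed_gf x $ (m - k)
      + s * (F_gf x $ k * H_pointed_gf x s $ (m - k)))"
    by (simp only: sum.distrib sum_distrib_left[symmetric] sum_distrib_right[symmetric])
      (simp add: H_gf_nth F_gf_nth F_pointed_gf_def H_pointed_gf_def split_def sum.distrib)
  also have "\<dots> =
      ((H_gf x s + F_gf x) * F_pointed_gf x + fps_const s * F_gf x * H_pointed_gf x s) $ m"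
    unfolding mult.assoc[of "fps_const s"] fps_add_nth fps_mult_left_const_nth
    by (simp add: fps_mult_nth atLeast0AtMost sum.distrib sum_distrib_left)
  finally show ?thesis .
qed

lemma sum_contacts_drop_power:
  fixes x :: real
  assumes "balanced p" "x \<noteq> 1"
  shows "(\<Sum>i\<in>contacts p. x ^ contact (drop i p)) = x / (x - 1) * (x ^ contact p - 1)"
proof -
  have "(1 - x) * (\<Sum>j=1..c. x ^ j) = x - x ^ Suc c" for c
    by (cases "c = 0") (simp_all add: sum_gp_multiplied)
  then show ?thesis
    using assms(2) by (simp add: sum_contacts_drop[OF assms(1)] field_simps)
qed

lemma F_pointed_gf_eq:
  assumes "x \<noteq> 1"
  shows "F_pointed_gf x = fps_const (x / (x - 1)) * (F_gf x - F_gf 1)"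
proof (rule fps_ext)
  fix n
  have "F_pointed_gf x $ n =
      (\<Sum>pq\<in>tamari_intervals n. x / (x - 1) * (x ^ contact (fst pq) - 1 ^ contact (fst pq)))"
    unfolding F_pointed_gf_def using assms
    by (auto simp: split_def mem_tamari_intervals_iff sum_contacts_drop_power intro!: sum.cong)
  then show "F_pointed_gf x $ n = (fps_const (x / (x - 1)) * (F_gf x - F_gf 1)) $ n"
    by (simp only: F_gf_nth fps_mult_left_const_nth fps_sub_nth sum_distrib_left[symmetric]
        sum_subtractf)
qed

lemma H_pointed_gf_eq:
  assumes "x \<noteq> 1"
  shows "H_pointed_gf x s = fps_const (x / (x - 1)) * (H_gf x s - H_gf 1 s)"
proof (rule fps_ext)
  fix n
  have "H_pointed_gf x s $ n = (\<Sum>pq\<in>tamari_intervals n.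
      x / (x - 1) * (x ^ contact (fst pq) * height_sum s (snd pq)
        - 1 ^ contact (fst pq) * height_sum s (snd pq)))"
    unfolding H_pointed_gf_def using assms
    by (auto simp: split_def mem_tamari_intervals_iff sum_contacts_drop_power algebra_simps
        intro!: sum.cong)
  then show "H_pointed_gf x s $ n = (fps_const (x / (x - 1)) * (H_gf x s - H_gf 1 s)) $ n"
    by (simp only: H_gf_nth fps_mult_left_const_nth fps_sub_nth sum_distrib_left[symmetric]
        sum_subtractf)
qed

lemma fps_eq_const_plus_X_mult:
  fixes f g :: "'a::comm_ring_1 fps"
  assumes "\<And>m. f $ Suc m = g $ m"
  shows "f = fps_const (f $ 0) + fps_X * g"
proof (rule fps_ext)
  fix n show "f $ n = (fps_const (f $ 0) + fps_X * g) $ n"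
    using assms by (cases n) simp_all
qed

theorem proposition2p2:
  fixes x s :: real
  assumes "x \<noteq> 1"
  shows "H_gf x s = F_gf x
     + fps_const (s * x) * fps_X * F_gf x * fps_const (1 / (x - 1)) * (H_gf x s - H_gf 1 s)
     + fps_const x * fps_X * H_gf x s * fps_const (1 / (x - 1)) * (F_gf x - F_gf 1)"
proof -
  let ?F = "F_gf x" and ?H = "H_gf x s" and ?D = "F_pointed_gf x" and ?E = "H_pointed_gf x s"
  let ?c = "fps_const (?F $ 0)"
  have "?H - ?F =
      (?c + fps_X * ((?H + ?F) * ?D + fps_const s * ?F * ?E)) - (?c + fps_X * (?F * ?D))"
  proof (rule arg_cong2[where f = minus])
    show "?F = ?c + fps_X * (?F * ?D)"
      by (rule fps_eq_const_plus_X_mult) (rule F_gf_nth_Suc)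
    show "?H = ?c + fps_X * ((?H + ?F) * ?D + fps_const s * ?F * ?E)"
      using fps_eq_const_plus_X_mult[OF H_gf_nth_Suc] H_gf_nth_0 by simp
  qed
  also have "\<dots> = fps_X * (?H * ?D + fps_const s * ?F * ?E)"
    by (simp add: algebra_simps)
  finally have "?H - ?F = fps_X * (?H * ?D + fps_const s * ?F * ?E)" .
  moreover have "fps_const (s * x) * fps_X * ?F * fps_const (1 / (x - 1)) * (?H - H_gf 1 s)
      = fps_X * (fps_const s * ?F * ?E)"
    unfolding H_pointed_gf_eq[OF assms] by (simp add: mult_ac)
  moreover have "fps_const x * fps_X * ?H * fps_const (1 / (x - 1)) * (?F - F_gf 1)
      = fps_X * (?H * ?D)"
    unfolding F_pointed_gf_eq[OF assms] by (simp add: mult_ac)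
  ultimately show ?thesis
    by (simp add: algebra_simps)
qed

end
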